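(* The theory $T=\mathrm{Th}(\mathbb{U})$ has the independence property if and only if there are a tuple of variables $x$ and a finite set $\Delta$ of formulas of $\mathcal{L}(\mathbb{U})$ such that $\mathrm{opD}(\{x=x\},\Delta)=\omega$.
   Context: $T$ complete, monster model $\mathbb{U}$. $\phi^1=\phi$, $\phi^0=\neg\phi$. For $0<n<\omega$, a partial type $\pi(x)$ and finite set $\Delta$ of partitioned formulas $\phi(x,y)$ of $\mathcal{L}(\mathbb{U})$: $\mathrm{opR}_n(\pi,\Delta)\ge0$ if $\pi$ consistent; limits as usual; $\mathrm{opR}_n(\pi,\Delta)\ge\alpha+1$ iff there are instances $\phi_0(x,a_0),\dots,\phi_{n-1}(x,a_{n-1})$ from $\Delta$ with $\mathrm{opR}_n(\pi\cup\{\bigwedge_{i<n}\phi_i(x,a_i)^{\sigma(i)}\},\Delta)\ge\alpha$ for all $\sigma\in 2^n$; $\infty$ means $\ge$ all ordinals. The localized op-dimension is $\mathrm{opD}(\pi,\Delta)=\sup\{0<n<\omega:\mathrm{opR}_n(\pi,\Delta)=\infty\}\le\omega$. A formula $\phi(x,y)$ has the independence property if for every $N$ there is $B\subseteq\mathbb{U}^y$, $|B|=N$, such that all $2^N$ combinations $\{\phi(x,b)^{t_b}:b\in B\}$ are consistent; $T$ has the independence property if some formula does. *)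

theory Defs
  imports Main "HOL-Library.Extended_Nat" "HOL-Library.Countable_Set"
begin

datatype 'f trm = Var nat | App 'f "'f trm list"

datatype ('f, 'r) fm =
    FEq "'f trm" "'f trm"
  | FRel 'r "'f trm list"
  | FNeg "('f, 'r) fm"
  | FConj "('f, 'r) fm" "('f, 'r) fm"
  | FEx nat "('f, 'r) fm"

primrec eval_trm :: "('f \<Rightarrow> 'a list \<Rightarrow> 'a) \<Rightarrow> (nat \<Rightarrow> 'a) \<Rightarrow> 'f trm \<Rightarrow> 'a" where
  "eval_trm I e (Var v) = e v"
| "eval_trm I e (App f ts) = I f (map (eval_trm I e) ts)"

primrec wf_trm :: "('f \<Rightarrow> nat) \<Rightarrow> 'f trm \<Rightarrow> bool" where
  "wf_trm ar (Var v) = True"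
| "wf_trm ar (App f ts) = (length ts = ar f \<and> list_all (wf_trm ar) ts)"

primrec fv_trm :: "'f trm \<Rightarrow> nat set" where
  "fv_trm (Var v) = {v}"
| "fv_trm (App f ts) = \<Union> (set (map fv_trm ts))"

primrec satf :: "('f \<Rightarrow> 'a list \<Rightarrow> 'a) \<Rightarrow> ('r \<Rightarrow> 'a list \<Rightarrow> bool) \<Rightarrow> (nat \<Rightarrow> 'a)
    \<Rightarrow> ('f, 'r) fm \<Rightarrow> bool" where
  "satf I R e (FEq s t) = (eval_trm I e s = eval_trm I e t)"
| "satf I R e (FRel r ts) = R r (map (eval_trm I e) ts)"
| "satf I R e (FNeg \<phi>) = (\<not> satf I R e \<phi>)"
| "satf I R e (FConj \<phi> \<psi>) = (satf I R e \<phi> \<and> satf I R e \<psi>)"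
| "satf I R e (FEx v \<phi>) = (\<exists>a. satf I R (e(v := a)) \<phi>)"

primrec wf_fm :: "('f \<Rightarrow> nat) \<Rightarrow> ('r \<Rightarrow> nat) \<Rightarrow> ('f, 'r) fm \<Rightarrow> bool" where
  "wf_fm af ar (FEq s t) = (wf_trm af s \<and> wf_trm af t)"
| "wf_fm af ar (FRel r ts) = (length ts = ar r \<and> (\<forall>t\<in>set ts. wf_trm af t))"
| "wf_fm af ar (FNeg \<phi>) = wf_fm af ar \<phi>"
| "wf_fm af ar (FConj \<phi> \<psi>) = (wf_fm af ar \<phi> \<and> wf_fm af ar \<psi>)"
| "wf_fm af ar (FEx v \<phi>) = wf_fm af ar \<phi>"

primrec fv :: "('f, 'r) fm \<Rightarrow> nat set" where
  "fv (FEq s t) = fv_trm s \<union> fv_trm t"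
| "fv (FRel r ts) = (\<Union>t\<in>set ts. fv_trm t)"
| "fv (FNeg \<phi>) = fv \<phi>"
| "fv (FConj \<phi> \<psi>) = fv \<phi> \<union> fv \<psi>"
| "fv (FEx v \<phi>) = fv \<phi> - {v}"

text \<open>An L-structure with universe the type 'a (the monster model U).\<close>

record ('f, 'r, 'a) lstruct =
  arF :: "'f \<Rightarrow> nat"
  arR :: "'r \<Rightarrow> nat"
  funI :: "'f \<Rightarrow> 'a list \<Rightarrow> 'a"
  relI :: "'r \<Rightarrow> 'a list \<Rightarrow> bool"

text \<open>The language L(U): function symbols 'f + 'a, where Inr a is a constant naming a.\<close>

definition arU :: "('f, 'r, 'a) lstruct \<Rightarrow> 'f + 'a \<Rightarrow> nat" where
  "arU M s = (case s of Inl f \<Rightarrow> arF M f | Inr a \<Rightarrow> 0)"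

definition funU :: "('f, 'r, 'a) lstruct \<Rightarrow> 'f + 'a \<Rightarrow> 'a list \<Rightarrow> 'a" where
  "funU M s = (case s of Inl f \<Rightarrow> funI M f | Inr a \<Rightarrow> (\<lambda>_. a))"

definition satL :: "('f, 'r, 'a) lstruct \<Rightarrow> (nat \<Rightarrow> 'a) \<Rightarrow> ('f, 'r) fm \<Rightarrow> bool" where
  "satL M e \<phi> = satf (funI M) (relI M) e \<phi>"

definition wfL :: "('f, 'r, 'a) lstruct \<Rightarrow> ('f, 'r) fm \<Rightarrow> bool" where
  "wfL M \<phi> = wf_fm (arF M) (arR M) \<phi>"

definition satU :: "('f, 'r, 'a) lstruct \<Rightarrow> (nat \<Rightarrow> 'a) \<Rightarrow> ('f + 'a, 'r) fm \<Rightarrow> bool" where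
  "satU M e \<phi> = satf (funU M) (relI M) e \<phi>"

definition wfU :: "('f, 'r, 'a) lstruct \<Rightarrow> ('f + 'a, 'r) fm \<Rightarrow> bool" where
  "wfU M \<phi> = wf_fm (arU M) (arR M) \<phi>"

definition params :: "('f + 'a, 'r) fm \<Rightarrow> 'a set" where
  "params \<phi> = {a. Inr a \<in> set1_fm \<phi>}"

section \<open>Monster model: (at least) aleph_1-saturation\<close>

definition aleph1_saturated :: "('f, 'r, 'a) lstruct \<Rightarrow> bool" where
  "aleph1_saturated M \<longleftrightarrow>
    (\<forall>(A :: 'a set) (\<Sigma> :: ('f + 'a, 'r) fm set) v.
       countable A \<longrightarrow>
       (\<forall>\<phi>\<in>\<Sigma>. wfU M \<phi> \<and> fv \<phi> \<subseteq> {v} \<and> params \<phi> \<subseteq> A) \<longrightarrow>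
       (\<forall>F\<subseteq>\<Sigma>. finite F \<longrightarrow> (\<exists>a. \<forall>\<phi>\<in>F. satU M (\<lambda>_. a) \<phi>)) \<longrightarrow>
       (\<exists>a. \<forall>\<phi>\<in>\<Sigma>. satU M (\<lambda>_. a) \<phi>))"

definition env :: "nat list \<Rightarrow> 'a list \<Rightarrow> nat list \<Rightarrow> 'a list \<Rightarrow> nat \<Rightarrow> 'a" where
  "env xs b ys c v = (case map_of (zip xs b @ zip ys c) v of Some a \<Rightarrow> a | None \<Rightarrow> undefined)"

text \<open>A partitioned L(U)-formula phi(x,y) (x = xs fixed): the formula with its y-tuple.\<close>

type_synonym ('f, 'r, 'a) pfm = "('f + 'a, 'r) fm \<times> nat list"

definition ok_pfm :: "('f, 'r, 'a) lstruct \<Rightarrow> nat list \<Rightarrow> ('f, 'r, 'a) pfm \<Rightarrow> bool" where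
  "ok_pfm M xs p \<longleftrightarrow> (case p of (\<phi>, ys) \<Rightarrow>
     wfU M \<phi> \<and> distinct ys \<and> set xs \<inter> set ys = {} \<and> fv \<phi> \<subseteq> set xs \<union> set ys)"

text \<open>The instance phi(x,c), as the set of x-tuples realizing it.\<close>

definition inst :: "('f, 'r, 'a) lstruct \<Rightarrow> nat list \<Rightarrow> ('f, 'r, 'a) pfm \<Rightarrow> 'a list
    \<Rightarrow> 'a list \<Rightarrow> bool" where
  "inst M xs p c = (\<lambda>b. satU M (env xs b (snd p) c) (fst p))"

text \<open>A partial type in x is represented by the set of (definable) conditions on x-tuples;
  consistency (with the elementary diagram of U) = finite satisfiability in U.\<close>

definition consistent :: "nat list \<Rightarrow> ('a list \<Rightarrow> bool) set \<Rightarrow> bool" where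
  "consistent xs \<pi> \<longleftrightarrow>
    (\<forall>F\<subseteq>\<pi>. finite F \<longrightarrow> (\<exists>b. length b = length xs \<and> (\<forall>p\<in>F. p b)))"

text \<open>One derivation step of opR_n: pi has rank \<ge> alpha+1 iff it splits by n instances
  from Delta into 2^n extensions of rank \<ge> alpha.\<close>

definition opR_step :: "('f, 'r, 'a) lstruct \<Rightarrow> nat \<Rightarrow> nat list \<Rightarrow> ('f, 'r, 'a) pfm set
    \<Rightarrow> ('a list \<Rightarrow> bool) set set \<Rightarrow> ('a list \<Rightarrow> bool) set set" where
  "opR_step M n xs \<Delta> S = {\<pi>. consistent xs \<pi> \<and>
     (\<exists>(ps :: nat \<Rightarrow> ('f, 'r, 'a) pfm) (cs :: nat \<Rightarrow> 'a list).
        (\<forall>i<n. ps i \<in> \<Delta> \<and> length (cs i) = length (snd (ps i))) \<and>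
        (\<forall>\<sigma> :: nat \<Rightarrow> bool.
           \<pi> \<union> {\<lambda>b. \<forall>i<n. inst M xs (ps i) (cs i) b = \<sigma> i} \<in> S))}"

text \<open>opR_n(pi,Delta) = \<infinity> (i.e. \<ge> every ordinal): membership in the greatest fixed point
  of the derivation operator (the limit of the ordinal-indexed derivation).\<close>

definition opR_inf :: "('f, 'r, 'a) lstruct \<Rightarrow> nat \<Rightarrow> nat list \<Rightarrow> ('f, 'r, 'a) pfm set
    \<Rightarrow> ('a list \<Rightarrow> bool) set \<Rightarrow> bool" where
  "opR_inf M n xs \<Delta> \<pi> \<longleftrightarrow> \<pi> \<in> gfp (opR_step M n xs \<Delta>)"

text \<open>opD(pi,Delta) = sup {0<n<omega : opR_n(pi,Delta) = \<infinity>}, valued in omega+1 = enat.\<close>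

definition opD :: "('f, 'r, 'a) lstruct \<Rightarrow> nat list \<Rightarrow> ('f, 'r, 'a) pfm set
    \<Rightarrow> ('a list \<Rightarrow> bool) set \<Rightarrow> enat" where
  "opD M xs \<Delta> \<pi> = Sup (enat ` {n. 0 < n \<and> opR_inf M n xs \<Delta> \<pi>})"

definition formula_IP :: "('f, 'r, 'a) lstruct \<Rightarrow> ('f, 'r) fm \<Rightarrow> nat list \<Rightarrow> nat list \<Rightarrow> bool" where
  "formula_IP M \<phi> xs ys \<longleftrightarrow>
     wfL M \<phi> \<and> distinct xs \<and> distinct ys \<and> set xs \<inter> set ys = {} \<and> fv \<phi> \<subseteq> set xs \<union> set ys \<and>
     (\<forall>N::nat. \<exists>B. B \<subseteq> {c. length c = length ys} \<and> finite B \<and> card B = N \<and>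
        (\<forall>t :: 'a list \<Rightarrow> bool. \<exists>b. length b = length xs \<and>
            (\<forall>c\<in>B. satL M (env xs b ys c) \<phi> = t c)))"

definition T_has_IP :: "('f, 'r, 'a) lstruct \<Rightarrow> bool" where
  "T_has_IP M \<longleftrightarrow> (\<exists>\<phi> xs ys. formula_IP M \<phi> xs ys)"

end

theory Submission
  imports Defs "HOL-Library.FuncSet"
begin

text \<open>
  If \<open>\<phi>(x;y)\<close> has the independence property, an \<open>\<aleph>\<^sub>1\<close>-saturated model contains an
  infinite sequence \<open>c\<^sub>0, c\<^sub>1, \<dots>\<close> of \<open>y\<close>-tuples such that every Boolean combination
  of the instances \<open>\<phi>(x,c\<^sub>i)\<close> is realised. It is built one element at a time: call a
  finite list of elements extendable if it extends to independent lists of every length;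
  that a one-element extension of an extendable list is again extendable is a countable,
  finitely satisfiable type in one variable, so saturation realises it. Given such a
  sequence, the consistent partial types that only depend on finitely many of the
  \<open>\<phi>(x,c\<^sub>i)\<close> form a post-fixed point of the op-rank derivation, hence
  \<open>opR\<^sub>n({x = x},{\<phi>}) = \<infinity>\<close> for every \<open>n\<close>.

  Conversely, \<open>opR\<^sub>n = \<infinity>\<close> provides \<open>n\<close> instances from \<open>\<Delta>\<close> all of whose Boolean
  combinations are consistent. As \<open>\<Delta>\<close> is finite, for large \<open>n\<close> some formula of \<open>\<Delta>\<close>
  occurs \<open>N\<close> times among them, and one formula does so for every \<open>N\<close>. Replacing its
  parameters by fresh variables yields a formula of the language of \<open>T\<close> with the
  independence property.
\<close>

section \<open>Syntax: coincidence, parameters and substitution\<close>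

lemma eval_trm_cong: "(\<forall>v\<in>fv_trm t. e v = e' v) \<Longrightarrow> eval_trm I e t = eval_trm I e' t"
  by (induction t) (auto cong: map_cong)

lemma satf_cong: "(\<forall>v\<in>fv \<phi>. e v = e' v) \<Longrightarrow> satf I R e \<phi> = satf I R e' \<phi>"
proof (induction \<phi> arbitrary: e e')
  case (FEq s t)
  then show ?case using eval_trm_cong[of s e e' I] eval_trm_cong[of t e e' I] by simp
next
  case (FRel r ts)
  then have "map (eval_trm I e) ts = map (eval_trm I e') ts"
    by (auto intro!: map_cong eval_trm_cong)
  then show ?case by (simp del: map_eq_conv)
next
  case (FConj \<phi> \<psi>)
  have "satf I R e \<phi> = satf I R e' \<phi>"
    by (rule FConj.IH(1)) (use FConj.prems in auto)
  moreover have "satf I R e \<psi> = satf I R e' \<psi>"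
    by (rule FConj.IH(2)) (use FConj.prems in auto)
  ultimately show ?case by simp
next
  case (FEx v \<phi>)
  then have "satf I R (e(v := a)) \<phi> = satf I R (e'(v := a)) \<phi>" for a
    by (intro FEx.IH) auto
  then show ?case by simp
qed simp

lemma finite_params: "finite (params \<phi>)"
proof -
  have "finite (set_trm t)" for t :: "('f + 'a) trm"
    by (induction t) auto
  then have "finite (set1_fm \<phi>)"
    by (induction \<phi>) auto
  moreover have "params \<phi> = Inr -` set1_fm \<phi>"
    by (auto simp: params_def)
  ultimately show ?thesis
    by (simp add: finite_vimageI)
qed

primrec lift_trm :: "'f trm \<Rightarrow> ('f + 'a) trm" where
  "lift_trm (Var v) = Var v"
| "lift_trm (App f ts) = App (Inl f) (map lift_trm ts)"

primrec lift_fm :: "('f, 'r) fm \<Rightarrow> ('f + 'a, 'r) fm" where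
  "lift_fm (FEq s t) = FEq (lift_trm s) (lift_trm t)"
| "lift_fm (FRel r ts) = FRel r (map lift_trm ts)"
| "lift_fm (FNeg \<phi>) = FNeg (lift_fm \<phi>)"
| "lift_fm (FConj \<phi> \<psi>) = FConj (lift_fm \<phi>) (lift_fm \<psi>)"
| "lift_fm (FEx v \<phi>) = FEx v (lift_fm \<phi>)"

lemma satU_lift_fm: "satU M e (lift_fm \<phi>) = satL M e \<phi>"
proof -
  have lift: "eval_trm (funU M) e (lift_trm t) = eval_trm (funI M) e t" for e t
    by (induction t) (auto simp: funU_def cong: map_cong)
  show ?thesis
    unfolding satU_def satL_def by (induction \<phi> arbitrary: e) (auto simp: lift comp_def)
qed

lemma fv_lift_trm: "fv_trm (lift_trm t) = fv_trm t"
  by (induction t) auto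

lemma fv_lift_fm: "fv (lift_fm \<phi>) = fv \<phi>"
  by (induction \<phi>) (auto simp: fv_lift_trm)

lemma wfU_lift_fm: "wfL M \<phi> \<Longrightarrow> wfU M (lift_fm \<phi>)"
proof -
  have "wf_trm (arF M) t \<Longrightarrow> wf_trm (arU M) (lift_trm t)" for t
    by (induction t) (auto simp: arU_def list_all_iff)
  then show "wfL M \<phi> \<Longrightarrow> wfU M (lift_fm \<phi>)"
    unfolding wfL_def wfU_def by (induction \<phi>) auto
qed

primrec bvars :: "('f, 'r) fm \<Rightarrow> nat set" where
  "bvars (FEq s t) = {}"
| "bvars (FRel r ts) = {}"
| "bvars (FNeg \<phi>) = bvars \<phi>"
| "bvars (FConj \<phi> \<psi>) = bvars \<phi> \<union> bvars \<psi>"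
| "bvars (FEx v \<phi>) = insert v (bvars \<phi>)"

lemma finite_bvars: "finite (bvars \<phi>)"
  by (induction \<phi>) auto

primrec elim_params_trm :: "('a \<Rightarrow> nat) \<Rightarrow> ('f + 'a) trm \<Rightarrow> 'f trm" where
  "elim_params_trm z (Var v) = Var v"
| "elim_params_trm z (App s ts) =
     (case s of Inl f \<Rightarrow> App f (map (elim_params_trm z) ts) | Inr a \<Rightarrow> Var (z a))"

primrec elim_params_fm :: "('a \<Rightarrow> nat) \<Rightarrow> ('f + 'a, 'r) fm \<Rightarrow> ('f, 'r) fm" where
  "elim_params_fm z (FEq s t) = FEq (elim_params_trm z s) (elim_params_trm z t)"
| "elim_params_fm z (FRel r ts) = FRel r (map (elim_params_trm z) ts)"
| "elim_params_fm z (FNeg \<phi>) = FNeg (elim_params_fm z \<phi>)"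
| "elim_params_fm z (FConj \<phi> \<psi>) = FConj (elim_params_fm z \<phi>) (elim_params_fm z \<psi>)"
| "elim_params_fm z (FEx v \<phi>) = FEx v (elim_params_fm z \<phi>)"

lemma eval_elim_params_trm:
  "(\<forall>v\<in>fv_trm t. e' v = e v) \<Longrightarrow> (\<forall>a. Inr a \<in> set_trm t \<longrightarrow> e' (z a) = a) \<Longrightarrow>
   eval_trm (funI M) e' (elim_params_trm z t) = eval_trm (funU M) e t"
proof (induction t)
  case (App s ts)
  show ?case
  proof (cases s)
    case (Inl f)
    have "map (eval_trm (funI M) e' \<circ> elim_params_trm z) ts = map (eval_trm (funU M) e) ts"
    proof (rule map_cong)
      fix t assume "t \<in> set ts"
      then show "(eval_trm (funI M) e' \<circ> elim_params_trm z) t = eval_trm (funU M) e t"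
        using App.IH[of t] App.prems by auto
    qed simp
    moreover have "funU M (Inl f) = funI M f"
      by (simp add: funU_def)
    ultimately show ?thesis using Inl by (simp del: map_eq_conv)
  next
    case (Inr a)
    then show ?thesis using App.prems by (simp add: funU_def)
  qed
qed simp

lemma satL_elim_params_fm:
  "(\<forall>v\<in>fv \<phi>. e' v = e v) \<Longrightarrow> (\<forall>a\<in>params \<phi>. e' (z a) = a) \<Longrightarrow>
   (\<forall>a\<in>params \<phi>. z a \<notin> bvars \<phi>) \<Longrightarrow> satL M e' (elim_params_fm z \<phi>) = satU M e \<phi>"
  unfolding satL_def satU_def
proof (induction \<phi> arbitrary: e e')
  case (FEq s t)
  then show ?case using eval_elim_params_trm[of s e' e z M] eval_elim_params_trm[of t e' e z M]
    by (simp add: params_def)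
next
  case (FRel r ts)
  then have "map (eval_trm (funI M) e' \<circ> elim_params_trm z) ts = map (eval_trm (funU M) e) ts"
    by (auto simp: params_def intro!: map_cong eval_elim_params_trm)
  then show ?case by (simp del: map_eq_conv)
next
  case (FConj \<phi> \<psi>)
  have "satf (funI M) (relI M) e' (elim_params_fm z \<phi>) = satf (funU M) (relI M) e \<phi>"
    by (rule FConj.IH(1)) (use FConj.prems in \<open>auto simp: params_def\<close>)
  moreover have "satf (funI M) (relI M) e' (elim_params_fm z \<psi>) = satf (funU M) (relI M) e \<psi>"
    by (rule FConj.IH(2)) (use FConj.prems in \<open>auto simp: params_def\<close>)
  ultimately show ?case by simp
next
  case (FEx v \<phi>)
  then have "satf (funI M) (relI M) (e'(v := a)) (elim_params_fm z \<phi>) =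
      satf (funU M) (relI M) (e(v := a)) \<phi>" for a
    by (intro FEx.IH) (auto simp: params_def)
  then show ?case by simp
qed (simp add: params_def)

lemma fv_elim_params_trm: "fv_trm (elim_params_trm z t) \<subseteq> fv_trm t \<union> z ` {a. Inr a \<in> set_trm t}"
proof (induction t)
  case (App s ts)
  then show ?case by (cases s) fastforce+
qed simp

lemma fv_elim_params_fm: "fv (elim_params_fm z \<phi>) \<subseteq> fv \<phi> \<union> z ` params \<phi>"
  unfolding params_def using fv_elim_params_trm[of z] by (induction \<phi>) fastforce+

lemma wfL_elim_params_fm: "wfU M \<phi> \<Longrightarrow> wfL M (elim_params_fm z \<phi>)"
proof -
  have "wf_trm (arU M) t \<Longrightarrow> wf_trm (arF M) (elim_params_trm z t)" for t
  proof (induction t)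
    case (App s ts)
    then show ?case by (cases s) (auto simp: arU_def list_all_iff)
  qed simp
  then show "wfU M \<phi> \<Longrightarrow> wfL M (elim_params_fm z \<phi>)"
    unfolding wfU_def wfL_def by (induction \<phi>) auto
qed

lemma env_nth:
  assumes "distinct (xs @ ys)" "length b = length xs" "length c = length ys" "i < length (xs @ ys)"
  shows "env xs b ys c ((xs @ ys) ! i) = (b @ c) ! i"
proof -
  have "zip xs b @ zip ys c = zip (xs @ ys) (b @ c)"
    using assms(2) by simp
  moreover have "map_of (zip (xs @ ys) (b @ c)) ((xs @ ys) ! i) = Some ((b @ c) ! i)"
    using assms by (intro map_of_zip_nth) auto
  ultimately show ?thesis
    by (simp add: env_def)
qed

lemma env_append:
  assumes "length b = length xs" "length c = length ys" "v \<in> set xs \<union> set ys"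
  shows "env xs b (ys @ ws) (c @ as) v = env xs b ys c v"
proof -
  have "v \<in> dom (map_of (zip ys c) ++ map_of (zip xs b))"
    using assms by auto
  then have "(map_of (zip ws as) ++ (map_of (zip ys c) ++ map_of (zip xs b))) v
      = (map_of (zip ys c) ++ map_of (zip xs b)) v"
    by (rule map_add_dom_app_simps(1))
  then show ?thesis
    using assms(2) by (simp add: env_def)
qed

fun upds :: "(nat \<Rightarrow> 'a) \<Rightarrow> nat list \<Rightarrow> 'a list \<Rightarrow> nat \<Rightarrow> 'a" where
  "upds e (v # vs) (a # as) = upds (e(v := a)) vs as"
| "upds e _ _ = e"

lemma upds_other: "v \<notin> set vs \<Longrightarrow> upds e vs as v = e v"
  by (induction e vs as rule: upds.induct) auto

lemma upds_nth:
  "distinct vs \<Longrightarrow> length as = length vs \<Longrightarrow> i < length vs \<Longrightarrow> upds e vs as (vs ! i) = as ! i"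
proof (induction e vs as arbitrary: i rule: upds.induct)
  case (1 e v vs a as)
  show ?case
  proof (cases i)
    case 0
    then show ?thesis using "1.prems" by (simp add: upds_other)
  next
    case (Suc n)
    then show ?thesis using 1 by (simp add: fun_upd_def)
  qed
qed auto

lemma map_upds: "distinct vs \<Longrightarrow> length as = length vs \<Longrightarrow> map (upds e vs as) vs = as"
  by (rule nth_equalityI) (auto simp: upds_nth)

lemma upds_append:
  "length as = length vs \<Longrightarrow> upds e (vs @ ws) (as @ bs) = upds (upds e vs as) ws bs"
  by (induction e vs as rule: upds.induct) auto

lemma upds_map_self: "upds e vs (map e vs) = e"
  by (induction vs) auto

lemma upds_interval:
  assumes "inj f"
  shows "upds e (map f [m..<m + length as]) as (f j) =
    (if m \<le> j \<and> j < m + length as then as ! (j - m) else e (f j))"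
proof (cases "m \<le> j \<and> j < m + length as")
  case True
  let ?vs = "map f [m..<m + length as]"
  have "distinct ?vs"
    using assms by (simp add: distinct_map inj_on_subset[OF assms])
  then have "upds e ?vs as (?vs ! (j - m)) = as ! (j - m)"
    using True by (intro upds_nth) auto
  moreover have "?vs ! (j - m) = f j"
    using True by (subst nth_map) auto
  ultimately show ?thesis
    using True by simp
next
  case False
  then have "f j \<notin> set (map f [m..<m + length as])"
    by (auto simp: inj_eq[OF assms])
  then show ?thesis
    using False by (auto simp: upds_other)
qed

lemma env_eq_upds:
  assumes "distinct (xs @ ys)" "length b = length xs" "length c = length ys" "v \<in> set (xs @ ys)"
  shows "env xs b ys c v = upds e (xs @ ys) (b @ c) v"
proof -
  obtain i where "i < length (xs @ ys)" "v = (xs @ ys) ! i"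
    using assms(4) by (metis in_set_conv_nth)
  then show ?thesis
    using assms by (simp add: env_nth upds_nth)
qed

definition fm_true :: "('f, 'r) fm" where
  "fm_true = FEx 0 (FEq (Var 0) (Var 0))"

primrec conj_list :: "('f, 'r) fm list \<Rightarrow> ('f, 'r) fm" where
  "conj_list [] = fm_true"
| "conj_list (\<theta> # \<theta>s) = FConj \<theta> (conj_list \<theta>s)"

definition ex_list :: "nat list \<Rightarrow> ('f, 'r) fm \<Rightarrow> ('f, 'r) fm" where
  "ex_list vs \<theta> = foldr FEx vs \<theta>"

definition signed_fm :: "bool \<Rightarrow> ('f, 'r) fm \<Rightarrow> ('f, 'r) fm" where
  "signed_fm s \<theta> = (if s then \<theta> else FNeg \<theta>)"

text \<open>Substitution is expressed as \<open>\<exists>v. v = t \<and> \<theta>\<close>, which needs no capture avoidance.\<close>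

fun subst_vars :: "nat list \<Rightarrow> nat list \<Rightarrow> ('f, 'r) fm \<Rightarrow> ('f, 'r) fm" where
  "subst_vars (v # vs) (w # ws) \<theta> = FEx v (FConj (FEq (Var v) (Var w)) (subst_vars vs ws \<theta>))"
| "subst_vars _ _ \<theta> = \<theta>"

fun subst_params :: "nat list \<Rightarrow> 'a list \<Rightarrow> ('f + 'a, 'r) fm \<Rightarrow> ('f + 'a, 'r) fm" where
  "subst_params (v # vs) (a # as) \<theta> =
     FEx v (FConj (FEq (Var v) (App (Inr a) [])) (subst_params vs as \<theta>))"
| "subst_params _ _ \<theta> = \<theta>"

lemma satf_conj_list: "satf I R e (conj_list \<theta>s) \<longleftrightarrow> (\<forall>\<theta>\<in>set \<theta>s. satf I R e \<theta>)"
  by (induction \<theta>s) (auto simp: fm_true_def)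

lemma satf_ex_list:
  "satf I R e (ex_list vs \<theta>) \<longleftrightarrow> (\<exists>as. length as = length vs \<and> satf I R (upds e vs as) \<theta>)"
proof (induction vs arbitrary: e)
  case (Cons v vs)
  have "satf I R e (ex_list (v # vs) \<theta>) \<longleftrightarrow>
      (\<exists>a as. length as = length vs \<and> satf I R (upds e (v # vs) (a # as)) \<theta>)"
    using Cons by (simp add: ex_list_def fun_upd_def)
  also have "\<dots> \<longleftrightarrow> (\<exists>as. length as = length (v # vs) \<and> satf I R (upds e (v # vs) as) \<theta>)"
    by (metis length_Suc_conv)
  finally show ?case .
qed (simp add: ex_list_def)

lemma satf_signed_fm: "satf I R e (signed_fm s \<theta>) \<longleftrightarrow> (satf I R e \<theta> \<longleftrightarrow> s)"
  by (simp add: signed_fm_def)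

lemma satf_subst_vars:
  "set vs \<inter> set ws = {} \<Longrightarrow> satf I R e (subst_vars vs ws \<theta>) = satf I R (upds e vs (map e ws)) \<theta>"
proof (induction vs ws \<theta> arbitrary: e rule: subst_vars.induct)
  case (1 v vs w ws \<theta>)
  then have "map (e(v := e w)) ws = map e ws" "w \<noteq> v"
    by auto
  then show ?case
    using 1 by simp
qed auto

lemma satU_subst_params: "satU M e (subst_params vs as \<theta>) = satU M (upds e vs as) \<theta>"
  unfolding satU_def
  by (induction vs as \<theta> arbitrary: e rule: subst_params.induct) (auto simp: funU_def)

lemma fv_conj_list: "fv (conj_list \<theta>s) \<subseteq> \<Union> (fv ` set \<theta>s)"
  by (induction \<theta>s) (auto simp: fm_true_def)

lemma fv_ex_list: "fv (ex_list vs \<theta>) = fv \<theta> - set vs"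
  by (induction vs) (auto simp: ex_list_def)

lemma fv_signed_fm: "fv (signed_fm s \<theta>) = fv \<theta>"
  by (simp add: signed_fm_def)

lemma fv_subst_vars:
  "length vs = length ws \<Longrightarrow> fv (subst_vars vs ws \<theta>) \<subseteq> (fv \<theta> - set vs) \<union> set ws"
  by (induction vs ws \<theta> rule: subst_vars.induct) auto

lemma fv_subst_params:
  "length vs = length as \<Longrightarrow> fv (subst_params vs as \<theta>) \<subseteq> fv \<theta> - set vs"
  by (induction vs as \<theta> rule: subst_params.induct) auto

lemma wf_conj_list: "\<forall>\<theta>\<in>set \<theta>s. wf_fm af ar \<theta> \<Longrightarrow> wf_fm af ar (conj_list \<theta>s)"
  by (induction \<theta>s) (auto simp: fm_true_def)

lemma wf_ex_list: "wf_fm af ar (ex_list vs \<theta>) = wf_fm af ar \<theta>"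
  by (induction vs) (auto simp: ex_list_def)

lemma wf_signed_fm: "wf_fm af ar (signed_fm s \<theta>) = wf_fm af ar \<theta>"
  by (simp add: signed_fm_def)

lemma wf_subst_vars: "wf_fm af ar (subst_vars vs ws \<theta>) = wf_fm af ar \<theta>"
  by (induction vs ws \<theta> rule: subst_vars.induct) auto

lemma wfU_subst_params: "wfU M (subst_params vs as \<theta>) = wfU M \<theta>"
  unfolding wfU_def by (induction vs as \<theta> rule: subst_params.induct) (auto simp: arU_def)

section \<open>Boolean independence and the op-rank\<close>

definition bool_independent :: "nat \<Rightarrow> (nat \<Rightarrow> 'a list \<Rightarrow> bool) \<Rightarrow> nat \<Rightarrow> bool" where
  "bool_independent l Q n \<longleftrightarrow> (\<forall>\<sigma> :: nat \<Rightarrow> bool. \<exists>b. length b = l \<and> (\<forall>i<n. Q i b = \<sigma> i))"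

lemma bool_independentD:
  "bool_independent l Q n \<Longrightarrow> \<exists>b. length b = l \<and> (\<forall>i<n. Q i b = \<sigma> i)"
  unfolding bool_independent_def by blast

lemma bool_independent_cong:
  assumes "\<And>i b. i < n \<Longrightarrow> length b = l \<Longrightarrow> Q i b = Q' i b"
  shows "bool_independent l Q n = bool_independent l Q' n"
proof -
  have "(\<exists>b. length b = l \<and> (\<forall>i<n. Q i b = \<sigma> i)) \<longleftrightarrow> (\<exists>b. length b = l \<and> (\<forall>i<n. Q' i b = \<sigma> i))"
    for \<sigma> :: "nat \<Rightarrow> bool"
  proof
    assume "\<exists>b. length b = l \<and> (\<forall>i<n. Q i b = \<sigma> i)"
    then obtain b where "length b = l" "\<forall>i<n. Q i b = \<sigma> i"
      by blast
    with assms show "\<exists>b. length b = l \<and> (\<forall>i<n. Q' i b = \<sigma> i)"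
      by auto
  next
    assume "\<exists>b. length b = l \<and> (\<forall>i<n. Q' i b = \<sigma> i)"
    then obtain b where "length b = l" "\<forall>i<n. Q' i b = \<sigma> i"
      by blast
    with assms show "\<exists>b. length b = l \<and> (\<forall>i<n. Q i b = \<sigma> i)"
      by auto
  qed
  then show ?thesis
    unfolding bool_independent_def by blast
qed

lemma bool_independent_mono:
  assumes "bool_independent l Q n" and "m \<le> n"
  shows "bool_independent l Q m"
  unfolding bool_independent_def
proof
  fix \<sigma> :: "nat \<Rightarrow> bool"
  obtain b where "length b = l" "\<forall>i<n. Q i b = \<sigma> i"
    using bool_independentD[OF assms(1), of \<sigma>] by blast
  then show "\<exists>b. length b = l \<and> (\<forall>i<m. Q i b = \<sigma> i)"
    using assms(2) by (intro exI[of _ b]) simp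
qed

lemma bool_independent_reindex:
  assumes indep: "bool_independent l Q n" and inj: "inj_on h {..<m}" and range: "h ` {..<m} \<subseteq> {..<n}"
  shows "bool_independent l (\<lambda>i. Q (h i)) m"
  unfolding bool_independent_def
proof
  fix \<sigma> :: "nat \<Rightarrow> bool"
  obtain b where b: "length b = l" "\<forall>j<n. Q j b = \<sigma> (the_inv_into {..<m} h j)"
    using bool_independentD[OF indep, of "\<lambda>j. \<sigma> (the_inv_into {..<m} h j)"] by blast
  have "Q (h i) b = \<sigma> i" if "i < m" for i
    using b(2) range that by (auto simp: the_inv_into_f_f[OF inj])
  then show "\<exists>b. length b = l \<and> (\<forall>i<m. Q (h i) b = \<sigma> i)"
    using b(1) by blast
qed

lemma bool_independent_inj_on:
  assumes "bool_independent l Q n"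
  shows "inj_on Q {..<n}"
proof (rule inj_onI)
  fix i j assume ij: "i \<in> {..<n}" "j \<in> {..<n}" "Q i = Q j"
  obtain b where b: "\<forall>k<n. Q k b = (k = i)"
    using bool_independentD[OF assms, of "\<lambda>k. k = i"] by blast
  have "Q j b = (j = i)"
    using b ij(2) by simp
  moreover have "Q j b"
    using b ij(1) unfolding ij(3)[symmetric] by simp
  ultimately show "i = j"
    by simp
qed

lemma bool_independent_iff_lists:
  "bool_independent l Q n \<longleftrightarrow>
    (\<forall>sl. length sl = n \<longrightarrow> (\<exists>b. length b = l \<and> (\<forall>i<n. Q i b = sl ! i)))"
proof
  assume "bool_independent l Q n"
  then show "\<forall>sl. length sl = n \<longrightarrow> (\<exists>b. length b = l \<and> (\<forall>i<n. Q i b = sl ! i))"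
    using bool_independentD by blast
next
  assume lists: "\<forall>sl. length sl = n \<longrightarrow> (\<exists>b. length b = l \<and> (\<forall>i<n. Q i b = sl ! i))"
  show "bool_independent l Q n"
    unfolding bool_independent_def
  proof
    fix \<sigma> :: "nat \<Rightarrow> bool"
    obtain b where "length b = l" "\<forall>i<n. Q i b = map \<sigma> [0..<n] ! i"
      using lists[rule_format, of "map \<sigma> [0..<n]"] by auto
    then show "\<exists>b. length b = l \<and> (\<forall>i<n. Q i b = \<sigma> i)"
      by (intro exI[of _ b]) simp
  qed
qed

lemma bool_independent_if_shatters:
  assumes "distinct cs" and shatter: "\<forall>t. \<exists>b. length b = l \<and> (\<forall>c\<in>set cs. R c b = t c)"
  shows "bool_independent l (\<lambda>i. R (cs ! i)) (length cs)"
  unfolding bool_independent_def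
proof
  fix \<sigma> :: "nat \<Rightarrow> bool"
  let ?N = "length cs"
  have inj: "inj_on (nth cs) {..<?N}"
    using assms(1) by (simp add: inj_on_nth)
  obtain b where b: "length b = l" "\<forall>c\<in>set cs. R c b = \<sigma> (the_inv_into {..<?N} (nth cs) c)"
    using shatter[rule_format, of "\<lambda>c. \<sigma> (the_inv_into {..<?N} (nth cs) c)"] by blast
  have "R (cs ! i) b = \<sigma> i" if "i < ?N" for i
  proof -
    have "R (cs ! i) b = \<sigma> (the_inv_into {..<?N} (nth cs) (cs ! i))"
      using b(2) that by simp
    also have "\<dots> = \<sigma> i"
      using the_inv_into_f_f[OF inj] that by simp
    finally show ?thesis .
  qed
  with b(1) show "\<exists>b. length b = l \<and> (\<forall>i<?N. R (cs ! i) b = \<sigma> i)"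
    by blast
qed

lemma shatters_if_bool_independent:
  assumes indep: "bool_independent l (\<lambda>i. R (cs i)) N"
  shows "card (cs ` {..<N}) = N"
    and "\<forall>t. \<exists>b. length b = l \<and> (\<forall>c\<in>cs ` {..<N}. R c b = t c)"
proof -
  have "inj_on (\<lambda>i. R (cs i)) {..<N}"
    by (rule bool_independent_inj_on[OF indep])
  then have "inj_on cs {..<N}"
    by (auto simp: inj_on_def)
  then show "card (cs ` {..<N}) = N"
    by (simp add: card_image)
  show "\<forall>t. \<exists>b. length b = l \<and> (\<forall>c\<in>cs ` {..<N}. R c b = t c)"
  proof
    fix t
    obtain b where "length b = l" "\<forall>i<N. R (cs i) b = t (cs i)"
      using bool_independentD[OF indep, of "\<lambda>i. t (cs i)"] by blast
    then show "\<exists>b. length b = l \<and> (\<forall>c\<in>cs ` {..<N}. R c b = t c)"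
      by auto
  qed
qed

definition has_indep_instances :: "('f, 'r, 'a) lstruct \<Rightarrow> nat list \<Rightarrow> ('f, 'r, 'a) pfm \<Rightarrow> nat \<Rightarrow> bool" where
  "has_indep_instances M xs p n \<longleftrightarrow> (\<exists>cs. (\<forall>i<n. length (cs i) = length (snd p)) \<and>
     bool_independent (length xs) (\<lambda>i. inst M xs p (cs i)) n)"

lemma has_indep_instances_mono:
  assumes "has_indep_instances M xs p n" and "m \<le> n"
  shows "has_indep_instances M xs p m"
proof -
  obtain cs where len: "\<forall>i<n. length (cs i) = length (snd p)"
    and indep: "bool_independent (length xs) (\<lambda>i. inst M xs p (cs i)) n"
    using assms(1) unfolding has_indep_instances_def by blast
  have "bool_independent (length xs) (\<lambda>i. inst M xs p (cs i)) m"
    by (rule bool_independent_mono[OF indep assms(2)])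
  with len assms(2) show ?thesis
    unfolding has_indep_instances_def by (intro exI[of _ cs]) simp
qed

lemma consistentD: "consistent xs \<pi> \<Longrightarrow> q \<in> \<pi> \<Longrightarrow> \<exists>b. length b = length xs \<and> q b"
  unfolding consistent_def by (erule allE[of _ "{q}"]) simp

lemma mono_opR_step: "mono (opR_step M n xs \<Delta>)"
proof (rule monoI)
  fix S T :: "('a list \<Rightarrow> bool) set set"
  assume "S \<subseteq> T"
  then show "opR_step M n xs \<Delta> S \<subseteq> opR_step M n xs \<Delta> T"
    unfolding opR_step_def by blast
qed

lemma opR_inf_unfold:
  "opR_inf M n xs \<Delta> \<pi> \<longleftrightarrow> consistent xs \<pi> \<and>
     (\<exists>ps cs. (\<forall>i<n. ps i \<in> \<Delta> \<and> length (cs i) = length (snd (ps i))) \<and>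
        (\<forall>\<sigma>. opR_inf M n xs \<Delta> (\<pi> \<union> {\<lambda>b. \<forall>i<n. inst M xs (ps i) (cs i) b = \<sigma> i})))"
proof -
  have "opR_inf M n xs \<Delta> \<pi> \<longleftrightarrow> \<pi> \<in> opR_step M n xs \<Delta> (gfp (opR_step M n xs \<Delta>))"
    unfolding opR_inf_def by (simp add: gfp_fixpoint[OF mono_opR_step])
  then show ?thesis
    unfolding opR_step_def opR_inf_def by simp
qed

lemma opR_inf_consistent: "opR_inf M n xs \<Delta> \<pi> \<Longrightarrow> consistent xs \<pi>"
  unfolding opR_inf_unfold[of M n xs \<Delta> \<pi>] by simp

lemma opR_inf_split:
  assumes "opR_inf M n xs \<Delta> \<pi>"
  obtains ps cs where "\<forall>i<n. ps i \<in> \<Delta> \<and> length (cs i) = length (snd (ps i))"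
    and "bool_independent (length xs) (\<lambda>i. inst M xs (ps i) (cs i)) n"
proof -
  obtain ps cs where ps: "\<forall>i<n. ps i \<in> \<Delta> \<and> length (cs i) = length (snd (ps i))"
    and ext: "\<forall>\<sigma>. opR_inf M n xs \<Delta> (\<pi> \<union> {\<lambda>b. \<forall>i<n. inst M xs (ps i) (cs i) b = \<sigma> i})"
    using assms unfolding opR_inf_unfold[of M n xs \<Delta> \<pi>] by blast
  have "\<exists>b. length b = length xs \<and> (\<forall>i<n. inst M xs (ps i) (cs i) b = \<sigma> i)" for \<sigma>
    using consistentD[OF opR_inf_consistent[OF ext[rule_format, of \<sigma>]]] by simp
  then have "bool_independent (length xs) (\<lambda>i. inst M xs (ps i) (cs i)) n"
    unfolding bool_independent_def by blast
  with ps that show ?thesis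
    by blast
qed

lemma Sup_enat_image_eq_infinity_iff: "Sup (enat ` S) = \<infinity> \<longleftrightarrow> (\<forall>m. \<exists>n\<in>S. m < n)"
proof -
  have "Sup (enat ` S) = \<infinity> \<longleftrightarrow> (\<forall>x<\<infinity>. \<exists>n\<in>S. x < enat n)"
    unfolding top_enat_def[symmetric] Sup_eq_top_iff by blast
  also have "\<dots> \<longleftrightarrow> (\<forall>m. \<exists>n\<in>S. m < n)"
  proof
    assume unbounded: "\<forall>x<\<infinity>. \<exists>n\<in>S. x < enat n"
    show "\<forall>m. \<exists>n\<in>S. m < n"
    proof
      fix m
      have "enat m < \<infinity>"
        by simp
      with unbounded have "\<exists>n\<in>S. enat m < enat n"
        by blast
      then show "\<exists>n\<in>S. m < n"
        by simp
    qed
  next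
    assume unbounded: "\<forall>m. \<exists>n\<in>S. m < n"
    show "\<forall>x<\<infinity>. \<exists>n\<in>S. x < enat n"
    proof (intro allI impI)
      fix x :: enat
      assume "x < \<infinity>"
      then obtain m where "x = enat m"
        by (cases x) auto
      then show "\<exists>n\<in>S. x < enat n"
        using unbounded by simp
    qed
  qed
  finally show ?thesis .
qed

lemma opD_eq_infinity_iff: "opD M xs \<Delta> \<pi> = \<infinity> \<longleftrightarrow> (\<forall>m. \<exists>n>m. opR_inf M n xs \<Delta> \<pi>)"
proof -
  let ?S = "{n. 0 < n \<and> opR_inf M n xs \<Delta> \<pi>}"
  have "(\<exists>n\<in>?S. m < n) \<longleftrightarrow> (\<exists>n>m. opR_inf M n xs \<Delta> \<pi>)" for m
  proof
    assume "\<exists>n>m. opR_inf M n xs \<Delta> \<pi>"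
    then obtain n where "m < n" "opR_inf M n xs \<Delta> \<pi>"
      by blast
    then have "n \<in> ?S"
      by simp
    with \<open>m < n\<close> show "\<exists>n\<in>?S. m < n"
      by blast
  qed auto
  then show ?thesis
    unfolding opD_def Sup_enat_image_eq_infinity_iff by simp
qed

lemma bool_independent_subset:
  assumes indep: "bool_independent l Q n" and I: "I \<subseteq> {..<n}" "N \<le> card I"
  obtains h where "\<forall>i<N. h i \<in> I" and "bool_independent l (\<lambda>i. Q (h i)) N"
proof -
  obtain J where J: "J \<subseteq> I" "card J = N"
    using obtain_subset_with_card_n[OF I(2)] by blast
  have "finite J"
    using finite_subset[OF subset_trans[OF J(1) I(1)]] by simp
  then obtain h where h: "bij_betw h {..<N} J"
    using ex_bij_betw_nat_finite[of J] J(2) by (auto simp: atLeast0LessThan)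
  have hJ: "h i \<in> J" if "i < N" for i
    using bij_betwE[OF h] that by blast
  have "bool_independent l (\<lambda>i. Q (h i)) N"
    using bool_independent_reindex[OF indep, of h N] h hJ J(1) I(1) by (auto simp: bij_betw_def)
  with hJ J(1) that show ?thesis
    by blast
qed

lemma pigeonhole_indep_instances:
  assumes "finite \<Delta>" and "opR_inf M n xs \<Delta> \<pi>" and "card \<Delta> * N < n"
  shows "\<exists>p\<in>\<Delta>. has_indep_instances M xs p N"
proof -
  obtain ps cs where ps: "\<forall>i<n. ps i \<in> \<Delta> \<and> length (cs i) = length (snd (ps i))"
    and indep: "bool_independent (length xs) (\<lambda>i. inst M xs (ps i) (cs i)) n"
    by (rule opR_inf_split[OF assms(2)])
  let ?occ = "\<lambda>p. ps -` {p} \<inter> {..<n}"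
  have "\<Delta> \<noteq> {}"
    using ps assms(3) by fastforce
  then obtain p where p: "p \<in> \<Delta>" "n \<le> card (?occ p) * card \<Delta>"
    using pigeonhole_card[of ps "{..<n}" \<Delta>] ps assms(1) by auto
  then have "card \<Delta> * N < card (?occ p) * card \<Delta>"
    using assms(3) by linarith
  then have "N * card \<Delta> < card (?occ p) * card \<Delta>"
    by (simp only: mult.commute[of "card \<Delta>" N])
  then have "N \<le> card (?occ p)"
    unfolding mult_less_cancel2 by simp
  then obtain h where h: "\<forall>i<N. h i \<in> ?occ p"
    and indep_h: "bool_independent (length xs) (\<lambda>i. inst M xs (ps (h i)) (cs (h i))) N"
    using bool_independent_subset[OF indep, of "?occ p"] by blast
  have occ: "h i < n \<and> ps (h i) = p" if "i < N" for i
    using h that by auto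
  have "bool_independent (length xs) (\<lambda>i. inst M xs (ps (h i)) (cs (h i))) N =
      bool_independent (length xs) (\<lambda>i. inst M xs p (cs (h i))) N"
    by (rule bool_independent_cong) (simp add: occ)
  with indep_h have "has_indep_instances M xs p N"
    unfolding has_indep_instances_def using ps occ by (intro exI[of _ "\<lambda>i. cs (h i)"]) simp
  with p(1) show ?thesis ..
qed

lemma opD_infinity_imp_indep_instances:
  assumes "finite \<Delta>" and "opD M xs \<Delta> \<pi> = \<infinity>"
  shows "\<exists>p\<in>\<Delta>. \<forall>N. has_indep_instances M xs p N"
proof (rule ccontr)
  assume "\<not> ?thesis"
  then have "\<forall>p\<in>\<Delta>. \<exists>N. \<not> has_indep_instances M xs p N"
    by blast
  then obtain bound where bound: "\<forall>p\<in>\<Delta>. \<not> has_indep_instances M xs p (bound p)"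
    by (rule bchoice[THEN exE])
  let ?N = "\<Sum>p\<in>\<Delta>. bound p"
  obtain n where "card \<Delta> * ?N < n" "opR_inf M n xs \<Delta> \<pi>"
    using assms(2) unfolding opD_eq_infinity_iff by blast
  then obtain p where p: "p \<in> \<Delta>" "has_indep_instances M xs p ?N"
    using pigeonhole_indep_instances[OF assms(1)] by blast
  moreover have "bound p \<le> ?N"
    using p(1) assms(1) by (intro member_le_sum) auto
  ultimately show False
    using bound has_indep_instances_mono by blast
qed

lemma consistent_extend_independent:
  assumes cons: "consistent xs \<pi>"
    and dep: "\<forall>q\<in>\<pi>. \<forall>b b'. (\<forall>i<m. Q i b = Q i b') \<longrightarrow> q b = q b'"
    and indep: "bool_independent (length xs) Q (m + n)"
  shows "consistent xs (\<pi> \<union> {\<lambda>b. \<forall>i<n. Q (m + i) b = \<sigma> i})"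
  unfolding consistent_def
proof (intro allI impI)
  let ?q = "\<lambda>b. \<forall>i<n. Q (m + i) b = \<sigma> i"
  fix F assume F: "F \<subseteq> \<pi> \<union> {?q}" "finite F"
  then have "F - {?q} \<subseteq> \<pi>" "finite (F - {?q})"
    by auto
  then obtain b0 where b0: "\<forall>q\<in>F - {?q}. q b0"
    using cons unfolding consistent_def by blast
  obtain b where b: "length b = length xs"
    "\<forall>i<m + n. Q i b = (if i < m then Q i b0 else \<sigma> (i - m))"
    using bool_independentD[OF indep, of "\<lambda>i. if i < m then Q i b0 else \<sigma> (i - m)"] by blast
  have "q b" if "q \<in> F" for q
  proof (cases "q = ?q")
    case True
    then show ?thesis
      using b(2) by simp
  next
    case False
    then have "q \<in> \<pi>" "q b0"
      using F b0 that by auto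
    moreover have "\<forall>i<m. Q i b = Q i b0"
      using b(2) by simp
    ultimately show ?thesis
      using dep by blast
  qed
  with b(1) show "\<exists>b. length b = length xs \<and> (\<forall>q\<in>F. q b)"
    by blast
qed

lemma opR_inf_if_indep_sequence:
  assumes "p \<in> \<Delta>" and len: "\<forall>i. length (cs i) = length (snd p)"
    and indep: "\<forall>m. bool_independent (length xs) (\<lambda>i. inst M xs p (cs i)) m"
  shows "opR_inf M n xs \<Delta> {\<lambda>b. True}"
proof -
  let ?Q = "\<lambda>i. inst M xs p (cs i)"
  define X where "X = {\<pi>. consistent xs \<pi> \<and>
    (\<exists>m. \<forall>q\<in>\<pi>. \<forall>b b'. (\<forall>i<m. ?Q i b = ?Q i b') \<longrightarrow> q b = q b')}"
  have "X \<subseteq> opR_step M n xs \<Delta> X"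
  proof
    fix \<pi> assume "\<pi> \<in> X"
    then obtain m where cons: "consistent xs \<pi>"
      and dep: "\<forall>q\<in>\<pi>. \<forall>b b'. (\<forall>i<m. ?Q i b = ?Q i b') \<longrightarrow> q b = q b'"
      unfolding X_def by blast
    have "\<pi> \<union> {\<lambda>b. \<forall>i<n. ?Q (m + i) b = \<sigma> i} \<in> X" for \<sigma>
    proof -
      have "\<forall>q\<in>\<pi> \<union> {\<lambda>b. \<forall>i<n. ?Q (m + i) b = \<sigma> i}. \<forall>b b'.
          (\<forall>i<m + n. ?Q i b = ?Q i b') \<longrightarrow> q b = q b'"
        using dep by auto
      then show ?thesis
        unfolding X_def using consistent_extend_independent[OF cons dep indep[rule_format]] by blast
    qed
    then show "\<pi> \<in> opR_step M n xs \<Delta> X"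
      unfolding opR_step_def using cons len \<open>p \<in> \<Delta>\<close>
      by (intro CollectI conjI exI[of _ "\<lambda>_. p"] exI[of _ "\<lambda>i. cs (m + i)"]) auto
  qed
  moreover have "{\<lambda>b. True} \<in> X"
    using bool_independentD[OF indep[rule_format, of 0], of "\<lambda>_. True"]
    unfolding X_def consistent_def by auto
  ultimately show ?thesis
    unfolding opR_inf_def by (rule weak_coinduct[rotated])
qed

section \<open>An infinite independent sequence in a saturated model\<close>

lemma take_drop_concat:
  "\<forall>c\<in>set cs. length c = k \<Longrightarrow> i < length cs \<Longrightarrow> take k (drop (i * k) (concat cs)) = cs ! i"
proof (induction cs arbitrary: i)
  case (Cons c cs)
  then show ?case by (cases i) auto
qed simp

locale IP_formula =
  fixes M :: "('f, 'r, 'a) lstruct" and \<phi> :: "('f, 'r) fm" and xs ys :: "nat list"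
  assumes IP: "formula_IP M \<phi> xs ys"
begin

lemma distinct_xs: "distinct xs" and distinct_ys: "distinct ys"
  and disjoint_xs_ys: "set xs \<inter> set ys = {}" and fv_\<phi>: "fv \<phi> \<subseteq> set xs \<union> set ys"
  and wfL_\<phi>: "wfL M \<phi>"
  using IP by (auto simp: formula_IP_def)

definition ip_pfm :: "('f, 'r, 'a) pfm" where
  "ip_pfm = (lift_fm \<phi>, ys)"

lemma inst_ip_pfm: "inst M xs ip_pfm c b = satL M (env xs b ys c) \<phi>"
  by (simp add: inst_def ip_pfm_def satU_lift_fm)

lemma ok_ip_pfm: "ok_pfm M xs ip_pfm"
  using distinct_ys disjoint_xs_ys fv_\<phi> wfL_\<phi>
  by (simp add: ok_pfm_def ip_pfm_def wfU_lift_fm fv_lift_fm)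

lemma exists_shattered_set:
  "\<exists>B. B \<subseteq> {c. length c = length ys} \<and> finite B \<and> card B = N \<and>
     (\<forall>t. \<exists>b. length b = length xs \<and> (\<forall>c\<in>B. inst M xs ip_pfm c b = t c))"
  using IP unfolding formula_IP_def inst_ip_pfm by blast

lemma length_ys_pos: "0 < length ys"
proof (rule ccontr)
  assume "\<not> 0 < length ys"
  then have "{c :: 'a list. length c = length ys} = {[]}"
    by auto
  moreover obtain B :: "'a list set" where "B \<subseteq> {c. length c = length ys}" "card B = 2"
    using exists_shattered_set[of 2] by blast
  ultimately show False
    using card_mono[of "{[]}" B] by simp
qed

text \<open>Saturation only realises types in one variable, so the \<open>y\<close>-tuples are chosen one
  element at a time and kept in a flat list, whose \<open>i\<close>-th tuple is \<open>chunk i\<close>.\<close>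

definition chunk :: "nat \<Rightarrow> 'a list \<Rightarrow> 'a list" where
  "chunk i L = take (length ys) (drop (i * length ys) L)"

definition indep_list :: "'a list \<Rightarrow> bool" where
  "indep_list L \<longleftrightarrow>
     bool_independent (length xs) (\<lambda>i. inst M xs ip_pfm (chunk i L)) (length L div length ys)"

definition extendable :: "'a list \<Rightarrow> bool" where
  "extendable es \<longleftrightarrow> (\<forall>N. \<exists>ds. length ds = N \<and> indep_list (es @ ds))"

lemma length_chunk: "Suc i * length ys \<le> length L \<Longrightarrow> length (chunk i L) = length ys"
  unfolding chunk_def by simp

lemma chunk_take: "Suc i * length ys \<le> n \<Longrightarrow> chunk i (take n L) = chunk i L"
  unfolding chunk_def by (simp add: drop_take take_take min_def)

lemma less_div_length_ys: "i < n div length ys \<longleftrightarrow> Suc i * length ys \<le> n"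
  using less_eq_div_iff_mult_less_eq[OF length_ys_pos, of "Suc i" n] by (simp add: Suc_le_eq)

lemma indep_list_take: "indep_list L \<Longrightarrow> indep_list (take n L)"
  unfolding indep_list_def
proof -
  assume indep: "bool_independent (length xs) (\<lambda>i. inst M xs ip_pfm (chunk i L)) (length L div length ys)"
  let ?m = "length (take n L) div length ys"
  have "?m \<le> length L div length ys"
    by (simp add: div_le_mono)
  then have "bool_independent (length xs) (\<lambda>i. inst M xs ip_pfm (chunk i L)) ?m"
    by (rule bool_independent_mono[OF indep])
  moreover have "chunk i (take n L) = chunk i L" if "i < ?m" for i
    using that by (simp add: less_div_length_ys chunk_take)
  ultimately show "bool_independent (length xs) (\<lambda>i. inst M xs ip_pfm (chunk i (take n L))) ?m"
    using bool_independent_cong[where Q = "\<lambda>i. inst M xs ip_pfm (chunk i (take n L))"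
        and Q' = "\<lambda>i. inst M xs ip_pfm (chunk i L)"] by simp
qed

lemma extendable_Nil: "extendable []"
  unfolding extendable_def
proof
  fix N
  obtain B where B: "B \<subseteq> {c. length c = length ys}" "finite B" "card B = N"
    and shatter: "\<forall>t. \<exists>b. length b = length xs \<and> (\<forall>c\<in>B. inst M xs ip_pfm c b = t c)"
    using exists_shattered_set[of N] by blast
  obtain cs where cs: "distinct cs" "set cs = B"
    using finite_distinct_list[OF B(2)] by blast
  have len_cs: "length cs = N"
    using cs B(3) distinct_card by fastforce
  have len: "\<forall>c\<in>set cs. length c = length ys"
    using cs B(1) by auto
  let ?L = "concat cs"
  have len_L: "length ?L = N * length ys"
    using len len_cs by (simp add: length_concat sum_list_triv cong: map_cong)
  have "bool_independent (length xs) (\<lambda>i. inst M xs ip_pfm (cs ! i)) N"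
    using bool_independent_if_shatters[OF cs(1), where R = "inst M xs ip_pfm"] shatter
    unfolding cs(2) len_cs by blast
  moreover have "chunk i ?L = cs ! i" if "i < N" for i
    unfolding chunk_def using take_drop_concat[OF len] that len_cs by simp
  moreover have "length ?L div length ys = N"
    using len_L length_ys_pos by simp
  ultimately have "indep_list ?L"
    unfolding indep_list_def
    using bool_independent_cong[where Q = "\<lambda>i. inst M xs ip_pfm (chunk i ?L)"
        and Q' = "\<lambda>i. inst M xs ip_pfm (cs ! i)"] by simp
  then have "indep_list (take N ?L)"
    by (rule indep_list_take)
  moreover have "length (take N ?L) = N"
  proof -
    have "N * 1 \<le> N * length ys"
      using length_ys_pos by (intro mult_le_mono2) linarith
    then show ?thesis
      using len_L by simp
  qed
  ultimately show "\<exists>ds. length ds = N \<and> indep_list ([] @ ds)"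
    by (simp only: append_Nil) blast
qed

text \<open>The variable \<open>elem_var j\<close> stands for the \<open>j\<close>-th element of such a list.\<close>

definition elem_var :: "nat \<Rightarrow> nat" where
  "elem_var j = Suc (sum_list xs + sum_list ys) + j"

lemma inj_elem_var: "inj elem_var"
  by (simp add: inj_def elem_var_def)

lemma elem_var_notin: "elem_var j \<notin> set xs" "elem_var j \<notin> set ys"
proof -
  have "v < elem_var j" if "v \<in> set xs \<union> set ys" for v
    using that member_le_sum_list[of v xs] member_le_sum_list[of v ys]
    by (auto simp: elem_var_def)
  then show "elem_var j \<notin> set xs" "elem_var j \<notin> set ys"
    by auto
qed

definition chunk_fm :: "nat \<Rightarrow> ('f + 'a, 'r) fm" where
  "chunk_fm i = subst_vars ys (map elem_var [i * length ys..<i * length ys + length ys]) (lift_fm \<phi>)"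

definition pattern_fm :: "bool list \<Rightarrow> ('f + 'a, 'r) fm" where
  "pattern_fm sl = ex_list xs (conj_list (map (\<lambda>i. signed_fm (sl ! i) (chunk_fm i)) [0..<length sl]))"

definition indep_fm :: "nat \<Rightarrow> ('f + 'a, 'r) fm" where
  "indep_fm n = conj_list (map pattern_fm (List.n_lists (n div length ys) [True, False]))"

definition extension_fm :: "'a list \<Rightarrow> nat \<Rightarrow> ('f + 'a, 'r) fm" where
  "extension_fm es N = subst_params (map elem_var [0..<length es]) es
     (ex_list (map elem_var [Suc (length es)..<Suc (length es) + N]) (indep_fm (Suc (length es) + N)))"

lemma satU_chunk_fm:
  assumes L: "\<forall>j<length L. e (elem_var j) = L ! j" and i: "Suc i * length ys \<le> length L"
  shows "satU M e (chunk_fm i) = inst M xs ip_pfm (chunk i L) (map e xs)"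
proof -
  let ?k = "length ys"
  let ?ws = "map elem_var [i * ?k..<i * ?k + ?k]"
  have "map e ?ws = map (nth L) [i * ?k..<i * ?k + ?k]"
    using L i by (auto intro!: map_cong)
  also have "\<dots> = chunk i L"
    unfolding chunk_def using i by (intro nth_equalityI) auto
  finally have ws: "map e ?ws = chunk i L" .
  have len: "length (chunk i L) = ?k"
    using length_chunk[OF i] .
  have "set ys \<inter> set ?ws = {}"
    using elem_var_notin by auto
  then have "satU M e (chunk_fm i) = satU M (upds e ys (map e ?ws)) (lift_fm \<phi>)"
    unfolding chunk_fm_def satU_def by (rule satf_subst_vars)
  also have "\<dots> = satL M (upds e ys (chunk i L)) \<phi>"
    unfolding ws by (rule satU_lift_fm)
  also have "\<dots> = satL M (env xs (map e xs) ys (chunk i L)) \<phi>"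
  proof -
    have agree: "upds e ys (chunk i L) v = env xs (map e xs) ys (chunk i L) v" if "v \<in> fv \<phi>" for v
    proof -
      have "distinct (xs @ ys)"
        using distinct_xs distinct_ys disjoint_xs_ys by simp
      moreover have "v \<in> set (xs @ ys)"
        using fv_\<phi> that by auto
      ultimately have "env xs (map e xs) ys (chunk i L) v = upds e (xs @ ys) (map e xs @ chunk i L) v"
        using len by (intro env_eq_upds) simp_all
      then show ?thesis
        by (simp add: upds_append upds_map_self)
    qed
    show ?thesis
      unfolding satL_def by (rule satf_cong) (simp add: agree)
  qed
  finally show ?thesis
    by (simp add: inst_ip_pfm)
qed

lemma satU_pattern_fm:
  assumes L: "\<forall>j<length L. e (elem_var j) = L ! j" and sl: "length sl \<le> length L div length ys"
  shows "satU M e (pattern_fm sl) \<longleftrightarrow>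
    (\<exists>b. length b = length xs \<and> (\<forall>i<length sl. inst M xs ip_pfm (chunk i L) b = sl ! i))"
proof -
  have chunk: "satU M (upds e xs b) (chunk_fm i) = inst M xs ip_pfm (chunk i L) b"
    if "length b = length xs" "i < length sl" for b i
  proof -
    have "\<forall>j<length L. upds e xs b (elem_var j) = L ! j"
      using L elem_var_notin by (simp add: upds_other)
    moreover have "Suc i * length ys \<le> length L"
      using that(2) sl less_div_length_ys by (metis order_less_le_trans)
    ultimately show ?thesis
      using satU_chunk_fm map_upds[OF distinct_xs that(1)] by metis
  qed
  show ?thesis
    unfolding pattern_fm_def satU_def satf_ex_list satf_conj_list
    by (auto simp: satf_signed_fm chunk[unfolded satU_def])
qed

lemma satU_indep_fm:
  assumes L: "\<forall>j<length L. e (elem_var j) = L ! j" and n: "length L = n"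
  shows "satU M e (indep_fm n) \<longleftrightarrow> indep_list L"
proof -
  let ?m = "length L div length ys"
  have "satU M e (indep_fm n) \<longleftrightarrow> (\<forall>sl. length sl = ?m \<longrightarrow> satU M e (pattern_fm sl))"
    unfolding indep_fm_def satU_def satf_conj_list using n by (auto simp: set_n_lists)
  also have "\<dots> \<longleftrightarrow> (\<forall>sl. length sl = ?m \<longrightarrow>
      (\<exists>b. length b = length xs \<and> (\<forall>i<?m. inst M xs ip_pfm (chunk i L) b = sl ! i)))"
    using satU_pattern_fm[OF L] by auto
  also have "\<dots> \<longleftrightarrow> indep_list L"
    unfolding indep_list_def bool_independent_iff_lists ..
  finally show ?thesis .
qed

lemma satU_extension_fm:
  "satU M e (extension_fm es N) \<longleftrightarrow> (\<exists>ds. length ds = N \<and> indep_list (es @ e (elem_var (length es)) # ds))"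
proof -
  let ?n = "Suc (length es) + N"
  let ?e = "upds e (map elem_var [0..<length es]) es"
  let ?dvs = "map elem_var [Suc (length es)..<?n]"
  have "satU M e (extension_fm es N) \<longleftrightarrow>
      (\<exists>ds. length ds = N \<and> satU M (upds ?e ?dvs ds) (indep_fm ?n))"
    unfolding extension_fm_def satU_subst_params unfolding satU_def satf_ex_list
    by (simp only: length_map length_upt add_diff_cancel_left')
  also have "\<dots> \<longleftrightarrow> (\<exists>ds. length ds = N \<and> indep_list (es @ e (elem_var (length es)) # ds))"
  proof -
    have "satU M (upds ?e ?dvs ds) (indep_fm ?n) \<longleftrightarrow> indep_list (es @ e (elem_var (length es)) # ds)"
      if "length ds = N" for ds
    proof (rule satU_indep_fm)
      show "\<forall>j<length (es @ e (elem_var (length es)) # ds).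
          upds ?e ?dvs ds (elem_var j) = (es @ e (elem_var (length es)) # ds) ! j"
        using upds_interval[OF inj_elem_var, of ?e "Suc (length es)" ds]
          upds_interval[OF inj_elem_var, of e 0 es] that
        by (auto simp: nth_append nth_Cons')
    qed (simp add: that)
    then show ?thesis
      by auto
  qed
  finally show ?thesis .
qed

lemma fv_chunk_fm: "fv (chunk_fm i) \<subseteq> set xs \<union> elem_var ` {i * length ys..<i * length ys + length ys}"
  using fv_subst_vars[of ys "map elem_var [i * length ys..<i * length ys + length ys]" "lift_fm \<phi>"]
    fv_\<phi> by (auto simp: chunk_fm_def fv_lift_fm)

lemma fv_pattern_fm: "fv (pattern_fm sl) \<subseteq> elem_var ` {..<length sl * length ys}"
proof
  fix v assume "v \<in> fv (pattern_fm sl)"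
  then obtain i where i: "i < length sl" "v \<in> fv (chunk_fm i)" "v \<notin> set xs"
    using fv_conj_list unfolding pattern_fm_def fv_ex_list by (fastforce simp: fv_signed_fm)
  then obtain j where "v = elem_var j" "j < i * length ys + length ys"
    using fv_chunk_fm[of i] by auto
  moreover have "i * length ys + length ys \<le> length sl * length ys"
    using i(1) mult_le_mono1[of "Suc i" "length sl" "length ys"] by simp
  ultimately show "v \<in> elem_var ` {..<length sl * length ys}"
    by auto
qed

lemma fv_indep_fm: "fv (indep_fm n) \<subseteq> elem_var ` {..<n}"
proof
  fix v assume "v \<in> fv (indep_fm n)"
  then obtain sl where "length sl = n div length ys" "v \<in> fv (pattern_fm sl)"
    using fv_conj_list unfolding indep_fm_def by (fastforce simp: set_n_lists)
  then have "v \<in> elem_var ` {..<n div length ys * length ys}"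
    using fv_pattern_fm by force
  then obtain j where v: "v = elem_var j" and j: "j < n div length ys * length ys"
    by blast
  have "j < n"
    using j div_times_less_eq_dividend[of n "length ys"] by linarith
  with v show "v \<in> elem_var ` {..<n}"
    by blast
qed

lemma fv_extension_fm: "fv (extension_fm es N) \<subseteq> {elem_var (length es)}"
proof
  let ?n = "Suc (length es) + N"
  let ?us = "map elem_var [0..<length es]"
  let ?dvs = "map elem_var [Suc (length es)..<?n]"
  fix v assume v: "v \<in> fv (extension_fm es N)"
  have "fv (extension_fm es N) \<subseteq> fv (ex_list ?dvs (indep_fm ?n)) - set ?us"
    unfolding extension_fm_def by (rule fv_subst_params) simp
  then have "v \<in> fv (indep_fm ?n)" "v \<notin> set ?dvs" "v \<notin> set ?us"
    using v unfolding fv_ex_list by blast+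
  then have "v \<in> fv (indep_fm ?n)" "v \<notin> elem_var ` {Suc (length es)..<?n}"
    "v \<notin> elem_var ` {0..<length es}"
    by (simp_all only: set_map set_upt not_False_eq_True)
  moreover obtain j where j: "v = elem_var j" "j < ?n"
    using fv_indep_fm calculation(1) by blast
  ultimately have "j = length es"
    by (simp add: inj_image_mem_iff[OF inj_elem_var])
  with j(1) show "v \<in> {elem_var (length es)}"
    by simp
qed

lemma wfU_extension_fm: "wfU M (extension_fm es N)"
proof -
  have "wf_fm (arU M) (arR M) (chunk_fm i)" for i
    using wfU_lift_fm[OF wfL_\<phi>] by (simp add: chunk_fm_def wfU_def wf_subst_vars)
  then have "wf_fm (arU M) (arR M) (indep_fm n)" for n
    by (simp add: indep_fm_def pattern_fm_def wf_conj_list wf_ex_list wf_signed_fm)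
  then show ?thesis
    unfolding extension_fm_def wfU_subst_params unfolding wfU_def wf_ex_list .
qed

lemma extension_fm_finitely_satisfiable:
  assumes ext: "extendable es" and F: "F \<subseteq> range (extension_fm es)" "finite F"
  shows "\<exists>a. \<forall>\<theta>\<in>F. satU M (\<lambda>_. a) \<theta>"
proof -
  obtain C where C: "finite C" "F = extension_fm es ` C"
    using finite_subset_image[OF F(2,1)] by blast
  define N0 where "N0 = Max (insert 0 C)"
  obtain ds where ds: "length ds = Suc N0" "indep_list (es @ ds)"
    using ext unfolding extendable_def by blast
  then obtain a ds' where a: "ds = a # ds'"
    by (cases ds) auto
  have "satU M (\<lambda>_. a) (extension_fm es N)" if "N \<in> C" for N
  proof -
    have "N \<le> N0"
      unfolding N0_def using C(1) that by (intro Max_ge) auto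
    have "indep_list (es @ a # take N ds')"
      using indep_list_take[OF ds(2), of "Suc (length es) + N"] a by simp
    moreover have "length (take N ds') = N"
      using ds(1) a \<open>N \<le> N0\<close> by simp
    ultimately show ?thesis
      unfolding satU_extension_fm by blast
  qed
  then show ?thesis
    using C(2) by blast
qed

lemma extendable_snoc:
  assumes sat: "aleph1_saturated M" and ext: "extendable es"
  shows "\<exists>a. extendable (es @ [a])"
proof -
  let ?\<Sigma> = "range (extension_fm es)"
  let ?A = "\<Union>N. params (extension_fm es N)"
  have "countable ?A"
    by (intro countable_UN) (auto intro: countable_finite finite_params)
  moreover have "\<forall>\<theta>\<in>?\<Sigma>. wfU M \<theta> \<and> fv \<theta> \<subseteq> {elem_var (length es)} \<and> params \<theta> \<subseteq> ?A"
    using wfU_extension_fm fv_extension_fm by blast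
  moreover have "\<forall>F\<subseteq>?\<Sigma>. finite F \<longrightarrow> (\<exists>a. \<forall>\<theta>\<in>F. satU M (\<lambda>_. a) \<theta>)"
    using extension_fm_finitely_satisfiable[OF ext] by blast
  moreover have "countable ?A \<longrightarrow>
      (\<forall>\<theta>\<in>?\<Sigma>. wfU M \<theta> \<and> fv \<theta> \<subseteq> {elem_var (length es)} \<and> params \<theta> \<subseteq> ?A) \<longrightarrow>
      (\<forall>F\<subseteq>?\<Sigma>. finite F \<longrightarrow> (\<exists>a. \<forall>\<theta>\<in>F. satU M (\<lambda>_. a) \<theta>)) \<longrightarrow>
      (\<exists>a. \<forall>\<theta>\<in>?\<Sigma>. satU M (\<lambda>_. a) \<theta>)"
    by (rule sat[unfolded aleph1_saturated_def, THEN spec, THEN spec, THEN spec])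
  ultimately obtain a where a: "\<forall>\<theta>\<in>?\<Sigma>. satU M (\<lambda>_. a) \<theta>"
    by blast
  have "extendable (es @ [a])"
    unfolding extendable_def
  proof
    fix N
    have "satU M (\<lambda>_. a) (extension_fm es N)"
      using a by blast
    then show "\<exists>ds. length ds = N \<and> indep_list ((es @ [a]) @ ds)"
      unfolding satU_extension_fm by simp
  qed
  then show ?thesis ..
qed

primrec ext_seq :: "nat \<Rightarrow> 'a list" where
  "ext_seq 0 = []"
| "ext_seq (Suc n) = ext_seq n @ [SOME a. extendable (ext_seq n @ [a])]"

lemma extendable_ext_seq: "aleph1_saturated M \<Longrightarrow> extendable (ext_seq n)"
proof (induction n)
  case (Suc n)
  then show ?case
    using someI_ex[OF extendable_snoc[OF Suc.prems Suc.IH]] by simp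
qed (simp add: extendable_Nil)

lemma length_ext_seq: "length (ext_seq n) = n"
  by (induction n) auto

lemma take_ext_seq: "m \<le> n \<Longrightarrow> take m (ext_seq n) = ext_seq m"
proof (induction n rule: dec_induct)
  case (step n)
  then show ?case
    using length_ext_seq[of n] by simp
qed (simp add: length_ext_seq)

lemma indep_sequence:
  assumes "aleph1_saturated M"
  obtains cs where "\<forall>i. length (cs i) = length ys"
    and "\<forall>m. bool_independent (length xs) (\<lambda>i. inst M xs ip_pfm (cs i)) m"
proof
  let ?k = "length ys"
  let ?cs = "\<lambda>i. chunk i (ext_seq (Suc i * ?k))"
  show "\<forall>i. length (?cs i) = ?k"
    by (simp add: length_chunk length_ext_seq)
  show "\<forall>m. bool_independent (length xs) (\<lambda>i. inst M xs ip_pfm (?cs i)) m"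
  proof
    fix m
    have "indep_list (ext_seq (m * ?k))"
      using extendable_ext_seq[OF assms, of "m * ?k"] unfolding extendable_def
      by (metis append.right_neutral length_0_conv)
    then have "bool_independent (length xs) (\<lambda>i. inst M xs ip_pfm (chunk i (ext_seq (m * ?k)))) m"
      unfolding indep_list_def length_ext_seq using length_ys_pos by simp
    moreover have "chunk i (ext_seq (m * ?k)) = ?cs i" if "i < m" for i
    proof -
      have "Suc i * ?k \<le> m * ?k"
        using that by (intro mult_le_mono1) simp
      then show ?thesis
        using chunk_take[of i "Suc i * ?k" "ext_seq (m * ?k)"] take_ext_seq by simp
    qed
    ultimately show "bool_independent (length xs) (\<lambda>i. inst M xs ip_pfm (?cs i)) m"
      using bool_independent_cong[where Q = "\<lambda>i. inst M xs ip_pfm (chunk i (ext_seq (m * ?k)))"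
          and Q' = "\<lambda>i. inst M xs ip_pfm (?cs i)"] by simp
  qed
qed

end

section \<open>Eliminating parameters\<close>

lemma fresh_vars:
  fixes S :: "nat set"
  assumes "finite S"
  shows "\<exists>ws. length ws = n \<and> distinct ws \<and> set ws \<inter> S = {}"
proof -
  define B where "B = Suc (Max (insert 0 S))"
  have "w \<notin> S" if "B \<le> w" for w :: nat
  proof
    assume "w \<in> S"
    then have "w \<le> Max (insert 0 S)"
      using \<open>finite S\<close> by simp
    with that show False
      by (simp add: B_def)
  qed
  then have "set [B..<B + n] \<inter> S = {}"
    by auto
  then show ?thesis
    by (intro exI[of _ "[B..<B + n]"]) simp
qed

lemma satL_elim_params_env:
  assumes distinct: "distinct (xs @ zs @ ws)" and z: "map z as = ws"
    and params: "params \<theta> \<subseteq> set as" and fv: "fv \<theta> \<subseteq> set xs \<union> set zs"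
    and bvars: "set ws \<inter> bvars \<theta> = {}"
    and b: "length b = length xs" and c: "length c = length zs"
  shows "satL M (env xs b (zs @ ws) (c @ as)) (elim_params_fm z \<theta>) = satU M (env xs b zs c) \<theta>"
proof (rule satL_elim_params_fm)
  let ?e' = "env xs b (zs @ ws) (c @ as)"
  show "\<forall>v\<in>fv \<theta>. ?e' v = env xs b zs c v"
  proof
    fix v assume "v \<in> fv \<theta>"
    then show "?e' v = env xs b zs c v"
      using fv by (intro env_append[OF b c]) auto
  qed
  show "\<forall>a\<in>params \<theta>. ?e' (z a) = a"
  proof
    fix a assume "a \<in> params \<theta>"
    then have "a \<in> set as"
      using params by blast
    then obtain i where i: "i < length as" "a = as ! i"
      by (metis in_set_conv_nth)
    have len: "length ws = length as"
      using z by auto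
    let ?j = "length xs + length zs + i"
    have "?e' ((xs @ zs @ ws) ! ?j) = (b @ c @ as) ! ?j"
      using distinct b c len i(1) by (intro env_nth) simp_all
    moreover have "(xs @ zs @ ws) ! ?j = ws ! i" "(b @ c @ as) ! ?j = as ! i"
      using b c by (simp_all add: nth_append)
    moreover have "z a = ws ! i"
      using i z by auto
    ultimately show "?e' (z a) = a"
      using i(2) by simp
  qed
  have "z ` set as = set ws"
    using z by auto
  then show "\<forall>a\<in>params \<theta>. z a \<notin> bvars \<theta>"
    using params bvars by blast
qed

lemma elim_params:
  assumes "distinct xs" and ok: "ok_pfm M xs (\<theta>, zs)"
  obtains \<theta>' ws as where "wfL M \<theta>'" and "distinct (zs @ ws)" and "set xs \<inter> set (zs @ ws) = {}"
    and "fv \<theta>' \<subseteq> set xs \<union> set (zs @ ws)" and "length as = length ws"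
    and "\<And>b c. length b = length xs \<Longrightarrow> length c = length zs \<Longrightarrow>
      satL M (env xs b (zs @ ws) (c @ as)) \<theta>' = satU M (env xs b zs c) \<theta>"
proof -
  have wf: "wfU M \<theta>" and zs: "distinct zs" "set xs \<inter> set zs = {}"
    and fv: "fv \<theta> \<subseteq> set xs \<union> set zs"
    using ok by (auto simp: ok_pfm_def)
  obtain as where as: "distinct as" "set as = params \<theta>"
    using finite_distinct_list[OF finite_params[of \<theta>]] by auto
  obtain ws where ws: "length ws = length as" "distinct ws"
    "set ws \<inter> (set xs \<union> set zs \<union> bvars \<theta>) = {}"
    using fresh_vars[of "set xs \<union> set zs \<union> bvars \<theta>" "length as"] finite_bvars by auto
  define z where "z a = the (map_of (zip as ws) a)" for a
  have z: "map z as = ws"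
    using as(1) ws(1) by (intro nth_equalityI) (simp_all add: z_def map_of_zip_nth)
  have distinct: "distinct (xs @ zs @ ws)"
    using assms(1) zs ws by auto
  show ?thesis
  proof
    show "wfL M (elim_params_fm z \<theta>)"
      using wf by (rule wfL_elim_params_fm)
    show "distinct (zs @ ws)" "set xs \<inter> set (zs @ ws) = {}"
      using distinct by auto
    show "fv (elim_params_fm z \<theta>) \<subseteq> set xs \<union> set (zs @ ws)"
      using fv_elim_params_fm[of z \<theta>] fv as(2) z by auto
    show "length as = length ws"
      using ws(1) by simp
    show "satL M (env xs b (zs @ ws) (c @ as)) (elim_params_fm z \<theta>) = satU M (env xs b zs c) \<theta>"
      if "length b = length xs" "length c = length zs" for b c
      using satL_elim_params_env[OF distinct z _ fv _ that] as(2) ws(3) by auto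
  qed
qed

lemma T_has_IP_if_indep_instances:
  assumes "distinct xs" and "ok_pfm M xs p" and indep: "\<forall>N. has_indep_instances M xs p N"
  shows "T_has_IP M"
proof -
  obtain \<theta> zs where p: "p = (\<theta>, zs)"
    by fastforce
  obtain \<theta>' ws as where wf: "wfL M \<theta>'" and ys: "distinct (zs @ ws)" "set xs \<inter> set (zs @ ws) = {}"
    and fv: "fv \<theta>' \<subseteq> set xs \<union> set (zs @ ws)" and len: "length as = length ws"
    and sat: "\<And>b c. length b = length xs \<Longrightarrow> length c = length zs \<Longrightarrow>
      satL M (env xs b (zs @ ws) (c @ as)) \<theta>' = satU M (env xs b zs c) \<theta>"
    using elim_params[OF assms(1) assms(2)[unfolded p]] by blast
  let ?R = "\<lambda>c b. satL M (env xs b (zs @ ws) c) \<theta>'"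
  have "\<exists>B. B \<subseteq> {c. length c = length (zs @ ws)} \<and> finite B \<and> card B = N \<and>
      (\<forall>t. \<exists>b. length b = length xs \<and> (\<forall>c\<in>B. ?R c b = t c))" for N
  proof -
    obtain cs where cs: "\<forall>i<N. length (cs i) = length zs"
      and shatter: "bool_independent (length xs) (\<lambda>i. inst M xs p (cs i)) N"
      using indep unfolding has_indep_instances_def p by auto
    have "bool_independent (length xs) (\<lambda>i. ?R (cs i @ as)) N"
      using shatter bool_independent_cong[where Q = "\<lambda>i. ?R (cs i @ as)"
          and Q' = "\<lambda>i. inst M xs p (cs i)"] cs
      by (simp add: sat inst_def p)
    then have "card ((\<lambda>i. cs i @ as) ` {..<N}) = N"
      and "\<forall>t. \<exists>b. length b = length xs \<and> (\<forall>c\<in>(\<lambda>i. cs i @ as) ` {..<N}. ?R c b = t c)"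
      by (rule shatters_if_bool_independent)+
    moreover have "(\<lambda>i. cs i @ as) ` {..<N} \<subseteq> {c. length c = length (zs @ ws)}"
      using cs len by auto
    ultimately show ?thesis
      by blast
  qed
  with wf ys fv assms(1) have "formula_IP M \<theta>' xs (zs @ ws)"
    unfolding formula_IP_def by auto
  then show ?thesis
    unfolding T_has_IP_def by blast
qed

theorem proposition1p3:
  fixes M :: "('f, 'r, 'a) lstruct"
  assumes "aleph1_saturated M"
  shows "T_has_IP M \<longleftrightarrow>
    (\<exists>(xs :: nat list) (\<Delta> :: ('f, 'r, 'a) pfm set).
       distinct xs \<and> finite \<Delta> \<and> (\<forall>p\<in>\<Delta>. ok_pfm M xs p) \<and>
       opD M xs \<Delta> {\<lambda>b. True} = \<infinity>)"
proof
  assume "T_has_IP M"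
  then obtain \<phi> xs ys where "formula_IP M \<phi> xs ys"
    unfolding T_has_IP_def by blast
  then interpret IP_formula M \<phi> xs ys
    by unfold_locales
  obtain cs where "\<forall>i. length (cs i) = length ys"
    and "\<forall>m. bool_independent (length xs) (\<lambda>i. inst M xs ip_pfm (cs i)) m"
    by (rule indep_sequence[OF assms])
  then have "opR_inf M n xs {ip_pfm} {\<lambda>b. True}" for n
    by (intro opR_inf_if_indep_sequence) (simp_all add: ip_pfm_def)
  then have "opD M xs {ip_pfm} {\<lambda>b. True} = \<infinity>"
    unfolding opD_eq_infinity_iff by blast
  then show "\<exists>xs \<Delta>. distinct xs \<and> finite \<Delta> \<and> (\<forall>p\<in>\<Delta>. ok_pfm M xs p) \<and> opD M xs \<Delta> {\<lambda>b. True} = \<infinity>"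
    using distinct_xs ok_ip_pfm by blast
next
  assume "\<exists>xs \<Delta>. distinct xs \<and> finite \<Delta> \<and> (\<forall>p\<in>\<Delta>. ok_pfm M xs p) \<and> opD M xs \<Delta> {\<lambda>b. True} = \<infinity>"
  then obtain xs and \<Delta> :: "('f, 'r, 'a) pfm set" where xs: "distinct xs"
    and \<Delta>: "finite \<Delta>" "\<forall>p\<in>\<Delta>. ok_pfm M xs p" and "opD M xs \<Delta> {\<lambda>b. True} = \<infinity>"
    by blast
  then obtain p where "p \<in> \<Delta>" "\<forall>N. has_indep_instances M xs p N"
    using opD_infinity_imp_indep_instances by blast
  then show "T_has_IP M"
    using T_has_IP_if_indep_instances[OF xs] \<Delta>(2) by blast
qed

end
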